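(* Let $n\ge 2$. Any quantum query algorithm that, for every permutation $\sigma$ of $\{0,1,\dots,n-1\}$, given oracle access to the comparison matrix $M_\sigma$, outputs $\sigma$ with probability $1$ (no error) must make at least $$\frac{1}{2\pi}\,n\ln n-\frac{1-C_E}{2\pi}\,n+O(1)\ \approx\ 0.110\,n\log_2 n-0.067\,n+O(1)$$ comparisons (oracle queries), where $C_E=0.57721566\ldots$ is the Euler–Mascheroni constant.
   Context: Sorting $n$ numbers by comparisons is modeled as follows. The numbers are given by a permutation $\sigma$ of $\{0,\dots,n-1\}$, and the input is the comparison matrix $M_\sigma\in\{0,1\}^{n\times n}$ with $(M_\sigma)_{i,j}=1$ if $\sigma(i)\le\sigma(j)$ and $0$ otherwise. A quantum query algorithm works in the Hilbert space spanned by orthonormal vectors $|i,j,b,c\rangle$ with $0\le i,j\le n-1$, $b\in\{0,1\}$, $c\in\{0,1\}^w$ for some fixed $w\ge 0$. The oracle gate for input $\sigma$ is the unitary $O_\sigma|i,j,b,c\rangle=|i,j,b\oplus(M_\sigma)_{i,j},c\rangle$. An algorithm making $T$ queries applies fixed unitaries $U_0,\dots,U_T$ (independent of $\sigma$) interleaved with $O_\sigma$, producing $U_TO_\sigma\cdots U_1O_\sigma U_0|\vec 0\rangle$, and then a fixed measurement whose outcome is its output. The number of comparisons is $T$. *)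

theory Defs
  imports "HOL-Analysis.Analysis" "HOL-Combinatorics.Permutations"
begin

text \<open>Basis labels |i,j,b,c> are tuples (i,j,b,c); the workspace register c in {0,1}^w
  is encoded as a natural number c < 2^w.  Vectors are functions label => complex,
  supported on the finite basis set; operators are matrices label => label => complex.\<close>

type_synonym label = "nat \<times> nat \<times> bool \<times> nat"
type_synonym qvec = "label \<Rightarrow> complex"
type_synonym qop = "label \<Rightarrow> label \<Rightarrow> complex"

definition basis_set :: "nat \<Rightarrow> nat \<Rightarrow> label set" where
  "basis_set n w = {(i,j,b,c). i < n \<and> j < n \<and> c < 2^w}"

definition cmp_matrix :: "(nat \<Rightarrow> nat) \<Rightarrow> nat \<Rightarrow> nat \<Rightarrow> bool" where
  "cmp_matrix \<sigma> i j = (\<sigma> i \<le> \<sigma> j)"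

definition apply_op :: "nat \<Rightarrow> nat \<Rightarrow> qop \<Rightarrow> qvec \<Rightarrow> qvec" where
  "apply_op n w U v = (\<lambda>x. if x \<in> basis_set n w then (\<Sum>y\<in>basis_set n w. U x y * v y) else 0)"

definition qinner :: "nat \<Rightarrow> nat \<Rightarrow> qvec \<Rightarrow> qvec \<Rightarrow> complex" where
  "qinner n w v u = (\<Sum>x\<in>basis_set n w. cnj (v x) * u x)"

definition query_gate :: "(nat \<Rightarrow> nat) \<Rightarrow> qvec \<Rightarrow> qvec" where
  "query_gate \<sigma> v = (\<lambda>(i,j,b,c). v (i, j, b \<noteq> cmp_matrix \<sigma> i j, c))"

definition is_unitary :: "nat \<Rightarrow> nat \<Rightarrow> qop \<Rightarrow> bool" where
  "is_unitary n w U \<longleftrightarrow>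
     (\<forall>x\<in>basis_set n w. \<forall>y\<in>basis_set n w.
        (\<Sum>k\<in>basis_set n w. cnj (U k x) * U k y) = (if x = y then 1 else 0))"

definition init_state :: qvec where
  "init_state = (\<lambda>x. if x = (0, 0, False, 0) then 1 else 0)"

fun run_state :: "nat \<Rightarrow> nat \<Rightarrow> (nat \<Rightarrow> qop) \<Rightarrow> (nat \<Rightarrow> nat) \<Rightarrow> nat \<Rightarrow> qvec" where
  "run_state n w U \<sigma> 0 = apply_op n w (U 0) init_state"
| "run_state n w U \<sigma> (Suc k) = apply_op n w (U (Suc k)) (query_gate \<sigma> (run_state n w U \<sigma> k))"

definition is_povm :: "nat \<Rightarrow> nat \<Rightarrow> (nat \<Rightarrow> nat) set \<Rightarrow> ((nat \<Rightarrow> nat) \<Rightarrow> qop) \<Rightarrow> bool" where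
  "is_povm n w Out E \<longleftrightarrow> finite Out \<and>
     (\<forall>r\<in>Out. \<forall>v. Im (qinner n w v (apply_op n w (E r) v)) = 0
                   \<and> Re (qinner n w v (apply_op n w (E r) v)) \<ge> 0) \<and>
     (\<forall>x\<in>basis_set n w. \<forall>y\<in>basis_set n w.
        (\<Sum>r\<in>Out. E r x y) = (if x = y then 1 else 0))"

definition out_prob :: "nat \<Rightarrow> nat \<Rightarrow> nat \<Rightarrow> (nat \<Rightarrow> qop) \<Rightarrow> (nat \<Rightarrow> nat) set
    \<Rightarrow> ((nat \<Rightarrow> nat) \<Rightarrow> qop) \<Rightarrow> (nat \<Rightarrow> nat) \<Rightarrow> (nat \<Rightarrow> nat) \<Rightarrow> real" where
  "out_prob n w T U Out E \<sigma> r =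
     (if r \<in> Out then
        Re (qinner n w (run_state n w U \<sigma> T) (apply_op n w (E r) (run_state n w U \<sigma> T)))
      else 0)"

definition exact_sorting_alg :: "nat \<Rightarrow> nat \<Rightarrow> nat \<Rightarrow> (nat \<Rightarrow> qop) \<Rightarrow> (nat \<Rightarrow> nat) set
    \<Rightarrow> ((nat \<Rightarrow> nat) \<Rightarrow> qop) \<Rightarrow> bool" where
  "exact_sorting_alg n w T U Out E \<longleftrightarrow>
     (\<forall>k\<le>T. is_unitary n w (U k)) \<and> is_povm n w Out E \<and>
     (\<forall>\<sigma>. \<sigma> permutes {..<n} \<longrightarrow> out_prob n w T U Out E \<sigma> \<sigma> = 1)"

end

theory Submission
  imports Defs
begin

text \<open>
  Weighted adversary method.  Connect each ranking \<sigma> to every ranking obtained by taking one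
  item p out and reinserting it at another rank b, with weight 1/|b - \<sigma> p|.  The progress
  measure W(k), the weighted sum of the inner products of the states after k queries over
  all these edges, starts at n! * (sum over a \<noteq> b < n of 1/|a - b|) = 2 n! (n H(n) - n) and
  ends at 0, because an exact algorithm leaves the final states of distinct rankings
  orthogonal.  A query only changes the terms of the cells (i,j) whose comparison differs
  between the two endpoints of an edge.  Bounding these by AM-GM with the square root of the
  ratio of the rank gaps of i and j (a Schur test), the weights of all moves out of \<sigma> that
  flip a fixed cell form two Hilbert-type sums, each at most the integral of
  sqrt s / ((s + t) sqrt t) over t > 0, which is \<pi>.  So one query changes W by at most
  4\<pi> n!, whence 2 (n H(n) - n) \<le> 4\<pi> T, and H(n) \<ge> ln n + \<gamma> gives the bound with C = 0.
\<close>

section \<open>Inner products and the query gate\<close>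

lemma basis_set_eq_product:
  "basis_set n w = {..<n} \<times> {..<n} \<times> (UNIV::bool set) \<times> {..<(2::nat)^w}"
  unfolding basis_set_def by auto

lemma finite_basis_set [simp]: "finite (basis_set n w)"
  unfolding basis_set_eq_product by auto

definition cell_inner :: "qvec \<Rightarrow> qvec \<Rightarrow> nat \<Rightarrow> nat \<Rightarrow> nat \<Rightarrow> complex" where
  "cell_inner v u i j c =
     cnj (v (i,j,True,c)) * u (i,j,True,c) + cnj (v (i,j,False,c)) * u (i,j,False,c)"

text \<open>The contribution of cell (i,j,c) to the inner product of O\<sigma> v and O\<tau> u when the
  comparison matrices of \<sigma> and \<tau> differ at (i,j).\<close>

definition cell_cross :: "qvec \<Rightarrow> qvec \<Rightarrow> nat \<Rightarrow> nat \<Rightarrow> nat \<Rightarrow> complex" where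
  "cell_cross v u i j c =
     cnj (v (i,j,True,c)) * u (i,j,False,c) + cnj (v (i,j,False,c)) * u (i,j,True,c)"

definition cell_norm :: "nat \<Rightarrow> qvec \<Rightarrow> nat \<Rightarrow> nat \<Rightarrow> real" where
  "cell_norm w v i j = (\<Sum>c<(2::nat)^w. (cmod (v (i,j,True,c)))\<^sup>2 + (cmod (v (i,j,False,c)))\<^sup>2)"

definition cmp_differs :: "(nat \<Rightarrow> nat) \<Rightarrow> (nat \<Rightarrow> nat) \<Rightarrow> nat \<Rightarrow> nat \<Rightarrow> bool" where
  "cmp_differs \<sigma> \<tau> i j \<longleftrightarrow> cmp_matrix \<sigma> i j \<noteq> cmp_matrix \<tau> i j"

lemma qinner_eq_sum_cell_inner:
  "qinner n w v u = (\<Sum>i<n. \<Sum>j<n. \<Sum>c<(2::nat)^w. cell_inner v u i j c)"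
proof -
  have "qinner n w v u =
      (\<Sum>i<n. \<Sum>j<n. \<Sum>b\<in>(UNIV::bool set). \<Sum>c<(2::nat)^w. cnj (v (i,j,b,c)) * u (i,j,b,c))"
    unfolding qinner_def basis_set_eq_product by (simp add: sum.cartesian_product)
  also have "\<dots> = (\<Sum>i<n. \<Sum>j<n. \<Sum>c<(2::nat)^w. cell_inner v u i j c)"
    unfolding cell_inner_def UNIV_bool by (simp add: sum.distrib add.commute)
  finally show ?thesis .
qed

lemma Re_qinner_self: "Re (qinner n w v v) = (\<Sum>i<n. \<Sum>j<n. cell_norm w v i j)"
proof -
  have "Re (cell_inner v v i j c) = (cmod (v (i,j,True,c)))\<^sup>2 + (cmod (v (i,j,False,c)))\<^sup>2" for i j c
    unfolding cell_inner_def by (simp add: mult.commute[of "cnj _"] complex_norm_square[symmetric])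
  then show ?thesis
    unfolding qinner_eq_sum_cell_inner cell_norm_def by (simp add: Re_sum)
qed

lemma cell_norm_nonneg: "cell_norm w v i j \<ge> 0"
  unfolding cell_norm_def by (intro sum_nonneg) auto

lemma qinner_apply_unitary:
  assumes "is_unitary n w U"
  shows "qinner n w (apply_op n w U v) (apply_op n w U u) = qinner n w v u"
proof -
  let ?B = "basis_set n w"
  have "qinner n w (apply_op n w U v) (apply_op n w U u)
      = (\<Sum>x\<in>?B. cnj (\<Sum>y\<in>?B. U x y * v y) * (\<Sum>z\<in>?B. U x z * u z))"
    unfolding qinner_def apply_op_def by simp
  also have "\<dots> = (\<Sum>x\<in>?B. \<Sum>y\<in>?B. \<Sum>z\<in>?B. cnj (v y) * u z * (cnj (U x y) * U x z))"
    by (simp add: sum_distrib_left sum_distrib_right mult_ac)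
  also have "\<dots> = (\<Sum>y\<in>?B. \<Sum>z\<in>?B. \<Sum>x\<in>?B. cnj (v y) * u z * (cnj (U x y) * U x z))"
    by (rule trans[OF sum.swap], rule sum.cong[OF refl], rule sum.swap)
  also have "\<dots> = (\<Sum>y\<in>?B. \<Sum>z\<in>?B. cnj (v y) * u z * (if y = z then 1 else 0))"
    using assms unfolding is_unitary_def by (simp add: sum_distrib_left[symmetric])
  also have "\<dots> = qinner n w v u"
    unfolding qinner_def by (simp add: if_distrib cong: if_cong)
  finally show ?thesis .
qed

lemma qinner_query_gate:
  "qinner n w (query_gate \<sigma> v) (query_gate \<tau> u) =
    (\<Sum>i<n. \<Sum>j<n. if cmp_differs \<sigma> \<tau> i j
       then \<Sum>c<(2::nat)^w. cell_cross v u i j c else \<Sum>c<(2::nat)^w. cell_inner v u i j c)"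
proof -
  have cells: "(\<Sum>c<(2::nat)^w. cell_inner (query_gate \<sigma> v) (query_gate \<tau> u) i j c) =
      (if cmp_differs \<sigma> \<tau> i j
       then \<Sum>c<(2::nat)^w. cell_cross v u i j c else \<Sum>c<(2::nat)^w. cell_inner v u i j c)" for i j
    by (cases "cmp_differs \<sigma> \<tau> i j")
       (auto intro!: sum.cong simp: cell_inner_def cell_cross_def cmp_differs_def query_gate_def)
  then show ?thesis
    unfolding qinner_eq_sum_cell_inner by (simp only: cells)
qed

lemma qinner_query_gate_same: "qinner n w (query_gate \<sigma> v) (query_gate \<sigma> u) = qinner n w v u"
  unfolding qinner_query_gate by (simp add: cmp_differs_def qinner_eq_sum_cell_inner)

lemma qinner_query_gate_diff:
  "qinner n w (query_gate \<sigma> v) (query_gate \<tau> u) - qinner n w v u =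
    (\<Sum>i<n. \<Sum>j<n. if cmp_differs \<sigma> \<tau> i j
       then \<Sum>c<(2::nat)^w. cell_cross v u i j c - cell_inner v u i j c else 0)"
  unfolding qinner_query_gate qinner_eq_sum_cell_inner[of n w v u] sum_subtractf[symmetric]
  by (intro sum.cong refl) (simp add: sum_subtractf)

lemma mult_le_scaled_squares:
  fixes x y l :: real
  assumes "l > 0"
  shows "x * y \<le> l / 2 * x\<^sup>2 + y\<^sup>2 / (2 * l)"
proof -
  have "l / 2 * x\<^sup>2 + y\<^sup>2 / (2 * l) - x * y = (l * x - y)\<^sup>2 / (2 * l)"
    using assms by (simp add: field_simps power2_eq_square)
  moreover have "(l * x - y)\<^sup>2 / (2 * l) \<ge> 0" using assms by simp
  ultimately show ?thesis by linarith
qed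

lemma norm_diff_power2_le:
  fixes u v :: "'a::real_normed_vector"
  shows "(norm (u - v))\<^sup>2 \<le> 2 * (norm u)\<^sup>2 + 2 * (norm v)\<^sup>2"
proof -
  have "(norm (u - v))\<^sup>2 \<le> (norm u + norm v)\<^sup>2"
    by (intro power_mono norm_triangle_ineq4) auto
  also have "\<dots> \<le> 2 * (norm u)\<^sup>2 + 2 * (norm v)\<^sup>2"
    using sum_squares_ge_zero[of "norm u - norm v" 0] by (simp add: power2_eq_square algebra_simps)
  finally show ?thesis .
qed

lemma norm_cell_cross_minus_inner_le:
  assumes l: "l > 0"
  shows "cmod (cell_cross v u i j c - cell_inner v u i j c)
     \<le> l * ((cmod (v (i,j,True,c)))\<^sup>2 + (cmod (v (i,j,False,c)))\<^sup>2)
        + ((cmod (u (i,j,True,c)))\<^sup>2 + (cmod (u (i,j,False,c)))\<^sup>2) / l"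
proof -
  define aT aF bT bF where "aT = v (i,j,True,c)" and "aF = v (i,j,False,c)"
    and "bT = u (i,j,True,c)" and "bF = u (i,j,False,c)"
  have "cell_cross v u i j c - cell_inner v u i j c = cnj (aT - aF) * (bF - bT)"
    unfolding cell_cross_def cell_inner_def aT_def aF_def bT_def bF_def by (simp add: algebra_simps)
  then have "cmod (cell_cross v u i j c - cell_inner v u i j c) = cmod (aT - aF) * cmod (bF - bT)"
    by (simp only: norm_mult complex_mod_cnj)
  also have "\<dots> \<le> l / 2 * (cmod (aT - aF))\<^sup>2 + (cmod (bF - bT))\<^sup>2 / (2 * l)"
    by (rule mult_le_scaled_squares[OF l])
  also have "\<dots> \<le> l / 2 * (2 * (cmod aT)\<^sup>2 + 2 * (cmod aF)\<^sup>2)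
                 + (2 * (cmod bF)\<^sup>2 + 2 * (cmod bT)\<^sup>2) / (2 * l)"
    using l by (intro add_mono mult_left_mono divide_right_mono norm_diff_power2_le) auto
  also have "\<dots> = l * ((cmod aT)\<^sup>2 + (cmod aF)\<^sup>2) + ((cmod bT)\<^sup>2 + (cmod bF)\<^sup>2) / l"
    using l by (simp add: field_simps)
  finally show ?thesis unfolding aT_def aF_def bT_def bF_def .
qed

lemma norm_query_gate_diff_le:
  assumes l: "\<And>i j. cmp_differs \<sigma> \<tau> i j \<Longrightarrow> l i j > 0"
  shows "cmod (qinner n w (query_gate \<sigma> v) (query_gate \<tau> u) - qinner n w v u)
    \<le> (\<Sum>i<n. \<Sum>j<n. if cmp_differs \<sigma> \<tau> i j
          then l i j * cell_norm w v i j + cell_norm w u i j / l i j else 0)"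
proof -
  have cell: "cmod (\<Sum>c<(2::nat)^w. cell_cross v u i j c - cell_inner v u i j c)
      \<le> l i j * cell_norm w v i j + cell_norm w u i j / l i j" if "cmp_differs \<sigma> \<tau> i j" for i j
  proof -
    have "cmod (\<Sum>c<(2::nat)^w. cell_cross v u i j c - cell_inner v u i j c)
        \<le> (\<Sum>c<(2::nat)^w. cmod (cell_cross v u i j c - cell_inner v u i j c))"
      by (rule norm_sum)
    also have "\<dots> \<le> (\<Sum>c<(2::nat)^w. l i j * ((cmod (v (i,j,True,c)))\<^sup>2 + (cmod (v (i,j,False,c)))\<^sup>2)
                       + ((cmod (u (i,j,True,c)))\<^sup>2 + (cmod (u (i,j,False,c)))\<^sup>2) / l i j)"
      by (intro sum_mono norm_cell_cross_minus_inner_le l that)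
    also have "\<dots> = l i j * cell_norm w v i j + cell_norm w u i j / l i j"
      unfolding cell_norm_def by (simp add: sum.distrib[symmetric] sum_distrib_left sum_divide_distrib)
    finally show ?thesis .
  qed
  have "cmod (qinner n w (query_gate \<sigma> v) (query_gate \<tau> u) - qinner n w v u)
      \<le> (\<Sum>i<n. \<Sum>j<n. cmod (if cmp_differs \<sigma> \<tau> i j
            then \<Sum>c<(2::nat)^w. cell_cross v u i j c - cell_inner v u i j c else 0))"
    unfolding qinner_query_gate_diff by (intro order_trans[OF norm_sum] sum_mono norm_sum)
  also have "\<dots> \<le> (\<Sum>i<n. \<Sum>j<n. if cmp_differs \<sigma> \<tau> i j
          then l i j * cell_norm w v i j + cell_norm w u i j / l i j else 0)"
    by (intro sum_mono) (simp add: cell)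
  finally show ?thesis .
qed

section \<open>Positive operators and exact measurements\<close>

abbreviation qform :: "nat \<Rightarrow> nat \<Rightarrow> qop \<Rightarrow> qvec \<Rightarrow> complex" where
  "qform n w A v \<equiv> qinner n w v (apply_op n w A v)"

definition positive_op :: "nat \<Rightarrow> nat \<Rightarrow> qop \<Rightarrow> bool" where
  "positive_op n w A \<longleftrightarrow> (\<forall>v. Im (qform n w A v) = 0 \<and> Re (qform n w A v) \<ge> 0)"

lemma positive_opD:
  assumes "positive_op n w A"
  shows "Im (qform n w A v) = 0" and "Re (qform n w A v) \<ge> 0"
  using assms unfolding positive_op_def by auto

lemma apply_op_add_scale:
  "apply_op n w A (\<lambda>x. u x + t * v x) = (\<lambda>x. apply_op n w A u x + t * apply_op n w A v x)"
  unfolding apply_op_def by (auto simp: sum.distrib sum_distrib_left algebra_simps)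

lemma qinner_add_scale_left:
  "qinner n w (\<lambda>x. u x + t * v x) a = qinner n w u a + cnj t * qinner n w v a"
  unfolding qinner_def by (auto simp: sum.distrib sum_distrib_left algebra_simps)

lemma qinner_add_scale_right:
  "qinner n w a (\<lambda>x. u x + t * v x) = qinner n w a u + t * qinner n w a v"
  unfolding qinner_def by (auto simp: sum.distrib sum_distrib_left algebra_simps)

lemma qform_add_scale:
  "qform n w A (\<lambda>x. u x + t * v x) =
     qform n w A u + t * qinner n w u (apply_op n w A v) + cnj t * qinner n w v (apply_op n w A u)
     + (cnj t * t) * qform n w A v"
  unfolding apply_op_add_scale qinner_add_scale_left qinner_add_scale_right
  by (simp add: algebra_simps)

lemma linear_coeff_zero_if_quadratic_nonneg:
  fixes c q :: real
  assumes "q \<ge> 0" and "\<And>r. r * c + r\<^sup>2 * q \<ge> 0"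
  shows "c = 0"
proof (rule ccontr)
  assume "c \<noteq> 0"
  define e where "e = 1 / (q + 1)"
  have e0: "e > 0" and eq: "e * q < 1"
    using assms(1) unfolding e_def by (auto simp: field_simps)
  have "(- c * e) * c + (- c * e)\<^sup>2 * q = (c\<^sup>2 * e) * (e * q - 1)"
    by (simp add: power2_eq_square algebra_simps)
  moreover have "(c\<^sup>2 * e) * (e * q - 1) < 0"
    using \<open>c \<noteq> 0\<close> e0 eq by (intro mult_pos_neg) auto
  ultimately show False using assms(2)[of "- c * e"] by linarith
qed

text \<open>Polarisation with the vectors u + v and u + i v.\<close>

lemma positive_op_hermitian:
  assumes "positive_op n w A"
  shows "qinner n w u (apply_op n w A v) = cnj (qinner n w v (apply_op n w A u))"
proof -
  define a b where "a = qinner n w u (apply_op n w A v)" and "b = qinner n w v (apply_op n w A u)"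
  have real_forms: "Im (qform n w A u) = 0" "Im (qform n w A v) = 0"
    using positive_opD(1)[OF assms] by auto
  have "Im (qform n w A (\<lambda>x. u x + 1 * v x)) = 0" by (rule positive_opD(1)[OF assms])
  then have "Im a + Im b = 0"
    using real_forms unfolding qform_add_scale a_def b_def by simp
  moreover have "Im (qform n w A (\<lambda>x. u x + \<i> * v x)) = 0" by (rule positive_opD(1)[OF assms])
  then have "Re a - Re b = 0"
    using real_forms unfolding qform_add_scale a_def b_def by simp
  ultimately show ?thesis unfolding a_def[symmetric] b_def[symmetric] by (simp add: complex_eq_iff)
qed

lemma positive_op_qform_zero:
  assumes A: "positive_op n w A" and zero: "qform n w A v = 0"
  shows "qinner n w u (apply_op n w A v) = 0"
proof -
  define a b q where "a = qinner n w v (apply_op n w A u)"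
    and "b = qinner n w u (apply_op n w A v)" and "q = qform n w A u"
  have q: "Re q \<ge> 0" "Im q = 0" using positive_opD[OF A] unfolding q_def by auto
  have ab: "a = cnj b" unfolding a_def b_def by (rule positive_op_hermitian[OF A])
  have "Re (a + b) = 0"
  proof (rule linear_coeff_zero_if_quadratic_nonneg[OF q(1)])
    fix r :: real
    have "Re (qform n w A (\<lambda>x. v x + complex_of_real r * u x)) \<ge> 0" by (rule positive_opD(2)[OF A])
    then show "r * Re (a + b) + r\<^sup>2 * Re q \<ge> 0"
      unfolding qform_add_scale zero a_def[symmetric] b_def[symmetric] q_def[symmetric]
      by (simp add: power2_eq_square distrib_left)
  qed
  moreover have "Re (\<i> * a - \<i> * b) = 0"
  proof (rule linear_coeff_zero_if_quadratic_nonneg[OF q(1)])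
    fix r :: real
    have sq: "cnj (\<i> * complex_of_real r) * (\<i> * complex_of_real r) = complex_of_real (r * r)"
      by (simp add: algebra_simps)
    have "Re (qform n w A (\<lambda>x. v x + (\<i> * complex_of_real r) * u x)) \<ge> 0"
      by (rule positive_opD(2)[OF A])
    then show "r * Re (\<i> * a - \<i> * b) + r\<^sup>2 * Re q \<ge> 0"
      unfolding qform_add_scale zero a_def[symmetric] b_def[symmetric] q_def[symmetric] sq
      using q(2) by (simp add: power2_eq_square right_diff_distrib)
  qed
  ultimately show ?thesis unfolding b_def[symmetric] using ab by (simp add: complex_eq_iff)
qed

lemma is_povm_positive: "is_povm n w Out E \<Longrightarrow> r \<in> Out \<Longrightarrow> positive_op n w (E r)"
  unfolding is_povm_def positive_op_def by blast

lemma is_povm_sum_qinner: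
  assumes "is_povm n w Out E"
  shows "(\<Sum>r\<in>Out. qinner n w u (apply_op n w (E r) v)) = qinner n w u v"
proof -
  let ?B = "basis_set n w"
  have id: "(\<Sum>r\<in>Out. E r x y) = (if x = y then 1 else 0)" if "x \<in> ?B" "y \<in> ?B" for x y
    using assms that unfolding is_povm_def by blast
  have "(\<Sum>r\<in>Out. qinner n w u (apply_op n w (E r) v))
      = (\<Sum>r\<in>Out. \<Sum>x\<in>?B. \<Sum>y\<in>?B. cnj (u x) * (E r x y * v y))"
    unfolding qinner_def apply_op_def by (simp add: sum_distrib_left)
  also have "\<dots> = (\<Sum>x\<in>?B. \<Sum>y\<in>?B. \<Sum>r\<in>Out. cnj (u x) * (E r x y * v y))"
    by (rule trans[OF sum.swap], rule sum.cong[OF refl], rule sum.swap)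
  also have "\<dots> = (\<Sum>x\<in>?B. \<Sum>y\<in>?B. cnj (u x) * ((\<Sum>r\<in>Out. E r x y) * v y))"
    by (simp add: sum_distrib_left sum_distrib_right)
  also have "\<dots> = (\<Sum>x\<in>?B. \<Sum>y\<in>?B. if x = y then cnj (u x) * v x else 0)"
    by (intro sum.cong refl) (simp add: id)
  also have "\<dots> = qinner n w u v"
    unfolding qinner_def by simp
  finally show ?thesis .
qed

lemma povm_certain_outcome_excludes_others:
  assumes P: "is_povm n w Out E" and s: "s \<in> Out" "Re (qform n w (E s) \<psi>) = 1"
    and unit: "qinner n w \<psi> \<psi> = 1" and r: "r \<in> Out" "r \<noteq> s"
  shows "qform n w (E r) \<psi> = 0"
proof -
  have fin: "finite Out" using P unfolding is_povm_def by blast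
  have "(\<Sum>r\<in>Out. Re (qform n w (E r) \<psi>)) = 1"
    using is_povm_sum_qinner[OF P, of \<psi> \<psi>] unit by (simp flip: Re_sum)
  then have "(\<Sum>r\<in>Out-{s}. Re (qform n w (E r) \<psi>)) = 0"
    using s by (simp add: sum.remove[OF fin s(1)])
  then have "Re (qform n w (E r) \<psi>) = 0"
    using fin r positive_opD(2)[OF is_povm_positive[OF P]] by (subst (asm) sum_nonneg_eq_0_iff) auto
  moreover have "Im (qform n w (E r) \<psi>) = 0"
    using positive_opD(1)[OF is_povm_positive[OF P r(1)]] .
  ultimately show ?thesis by (simp add: complex_eq_iff)
qed

lemma povm_certain_outcomes_orthogonal:
  assumes P: "is_povm n w Out E" and st: "s \<in> Out" "t \<in> Out" "s \<noteq> t"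
    and \<psi>: "qinner n w \<psi> \<psi> = 1" "Re (qform n w (E s) \<psi>) = 1"
    and \<phi>: "qinner n w \<phi> \<phi> = 1" "Re (qform n w (E t) \<phi>) = 1"
  shows "qinner n w \<phi> \<psi> = 0"
proof -
  have fin: "finite Out" using P unfolding is_povm_def by blast
  have "qinner n w \<phi> (apply_op n w (E r) \<psi>) = 0" if r: "r \<in> Out" "r \<noteq> s" for r
    using positive_op_qform_zero[OF is_povm_positive[OF P r(1)]
        povm_certain_outcome_excludes_others[OF P st(1) \<psi>(2) \<psi>(1) r]] .
  then have "(\<Sum>r\<in>Out-{s}. qinner n w \<phi> (apply_op n w (E r) \<psi>)) = 0"
    by (intro sum.neutral) blast
  then have "qinner n w \<phi> \<psi> = qinner n w \<phi> (apply_op n w (E s) \<psi>)"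
    using is_povm_sum_qinner[OF P, of \<phi> \<psi>] by (simp add: sum.remove[OF fin st(1)])
  also have "\<dots> = cnj (qinner n w \<psi> (apply_op n w (E s) \<phi>))"
    by (rule positive_op_hermitian[OF is_povm_positive[OF P st(1)]])
  also have "qinner n w \<psi> (apply_op n w (E s) \<phi>) = 0"
    using positive_op_qform_zero[OF is_povm_positive[OF P st(1)]
        povm_certain_outcome_excludes_others[OF P st(2) \<phi>(2) \<phi>(1) st(1) st(3)]] .
  finally show ?thesis by simp
qed

section \<open>A Hilbert-type sum\<close>

definition schur_weight :: "real \<Rightarrow> real \<Rightarrow> real" where
  "schur_weight s t = sqrt s / ((s + t) * sqrt t)"

definition schur_primitive :: "real \<Rightarrow> real \<Rightarrow> real" where
  "schur_primitive s t = 2 * arctan (sqrt t / sqrt s)"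

lemma schur_weight_eq_sqrt_ratio:
  fixes s t :: real
  assumes "s > 0" "t > 0"
  shows "1 / (s + t) * sqrt (s / t) = schur_weight s t"
  unfolding schur_weight_def using assms by (simp add: real_sqrt_divide)

lemma schur_primitive_0 [simp]: "schur_primitive s 0 = 0"
  unfolding schur_primitive_def by simp

lemma schur_primitive_le_pi: "schur_primitive s t \<le> pi"
  unfolding schur_primitive_def using arctan_ubound[of "sqrt t / sqrt s"] by simp

lemma has_real_derivative_schur_primitive:
  assumes s: "s > 0" and t: "t > 0"
  shows "(schur_primitive s has_real_derivative schur_weight s t) (at t)"
proof -
  have "((\<lambda>t. 2 * arctan (sqrt t / sqrt s)) has_real_derivative
      2 * (inverse (1 + (sqrt t / sqrt s)\<^sup>2) * (inverse (sqrt t) / 2 / sqrt s))) (at t)"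
    by (rule DERIV_cmult[OF DERIV_chain2[OF DERIV_arctan DERIV_cdivide[OF DERIV_real_sqrt[OF t]]]])
  moreover have "2 * (inverse (1 + (b / a)\<^sup>2) * (inverse b / 2 / a)) = a / ((a\<^sup>2 + b\<^sup>2) * b)"
    if "a > 0" "b > 0" for a b :: real
  proof -
    have "a\<^sup>2 + b\<^sup>2 > 0" using that by (simp add: add_pos_pos)
    then show ?thesis using that by (simp add: divide_simps power2_eq_square)
  qed
  then have "2 * (inverse (1 + (sqrt t / sqrt s)\<^sup>2) * (inverse (sqrt t) / 2 / sqrt s))
      = schur_weight s t"
    using s t unfolding schur_weight_def by simp
  ultimately show ?thesis unfolding schur_primitive_def[abs_def] by simp
qed

lemma inverse_sqrt_midpoint_convex:
  fixes c x :: real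
  assumes "0 \<le> x" "x < c"
  shows "1 / sqrt (c + x) + 1 / sqrt (c - x) \<ge> 2 / sqrt c"
proof -
  have c: "c > 0" and cx: "c - x > 0" "c + x > 0" using assms by auto
  have prod: "(c + x) * (c - x) \<le> c * c" by (simp add: algebra_simps)
  have "1 / (c + x) + 1 / (c - x) = 2 * c / ((c + x) * (c - x))"
    using cx by (simp add: field_simps)
  also have "\<dots> \<ge> 2 * c / (c * c)"
    using cx c prod by (intro divide_left_mono) auto
  finally have a1: "1 / (c + x) + 1 / (c - x) \<ge> 2 / c" using c by simp
  have "sqrt ((c + x) * (c - x)) \<le> c"
    using real_sqrt_le_mono[OF prod] c by simp
  then have a2: "2 / sqrt ((c + x) * (c - x)) \<ge> 2 / c"
    using cx c by (intro divide_left_mono) auto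
  have "(2 / sqrt c)\<^sup>2 = 4 / c" using c by (simp add: power2_eq_square field_simps)
  also have "\<dots> \<le> 1 / (c + x) + 1 / (c - x) + 2 / sqrt ((c + x) * (c - x))"
    using a1 a2 by linarith
  also have "\<dots> = (1 / sqrt (c + x) + 1 / sqrt (c - x))\<^sup>2"
    using cx by (simp add: power2_sum power_divide real_sqrt_mult)
  finally show ?thesis by (rule power2_le_imp_le) (use cx in simp)
qed

lemma schur_weight_midpoint_convex:
  fixes s c x :: real
  assumes s: "s > 0" and x: "0 \<le> x" "x < c"
  shows "schur_weight s (c + x) + schur_weight s (c - x) \<ge> 2 * schur_weight s c"
proof -
  define up um vp vm where "up = 1 / (s + (c + x))" and "um = 1 / (s + (c - x))"
    and "vp = 1 / sqrt (c + x)" and "vm = 1 / sqrt (c - x)"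
  have c: "c > 0" and cx: "c - x > 0" "c + x > 0" using x by auto
  have pos: "up > 0" "um > 0" "vp > 0" "vm > 0"
    unfolding up_def um_def vp_def vm_def using cx s by auto
  \<comment> \<open>Chebyshev's sum inequality: both factors decrease in the argument.\<close>
  have "up \<le> um" "vp \<le> vm"
    unfolding up_def um_def vp_def vm_def using cx s x by (auto intro!: divide_left_mono)
  then have cheb: "(um - up) * (vm - vp) \<ge> 0" by simp
  have prod: "(s + c + x) * (s + c - x) \<le> (s + c) * (s + c)" by (simp add: algebra_simps)
  have "up + um = 2 * (s + c) / ((s + c + x) * (s + c - x))"
    unfolding up_def um_def using cx s by (simp add: field_simps)
  also have "\<dots> \<ge> 2 * (s + c) / ((s + c) * (s + c))"
    using cx s prod by (intro divide_left_mono) auto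
  also have "2 * (s + c) / ((s + c) * (s + c)) = 2 / (s + c)"
    by (rule nonzero_mult_divide_mult_cancel_right) (use s c in simp)
  finally have u2: "up + um \<ge> 2 / (s + c)" .
  have v2: "vp + vm \<ge> 2 / sqrt c"
    unfolding vp_def vm_def by (rule inverse_sqrt_midpoint_convex[OF x])
  have "(up + um) * (vp + vm) \<ge> (2 / (s + c)) * (2 / sqrt c)"
    using u2 v2 pos s c by (intro mult_mono) auto
  then have "up * vp + um * vm \<ge> 2 * (1 / ((s + c) * sqrt c))"
    using cheb by (simp add: algebra_simps)
  then have "sqrt s * (up * vp + um * vm) \<ge> sqrt s * (2 * (1 / ((s + c) * sqrt c)))"
    using s by (intro mult_left_mono) auto
  moreover have "schur_weight s (c + x) = sqrt s * (up * vp)"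
    "schur_weight s (c - x) = sqrt s * (um * vm)"
    "schur_weight s c = sqrt s * (1 / ((s + c) * sqrt c))"
    unfolding schur_weight_def up_def vp_def um_def vm_def by (simp_all add: add.assoc)
  ultimately show ?thesis by (simp add: algebra_simps)
qed

text \<open>The midpoint rule underestimates the integral of a convex function.\<close>

lemma schur_weight_le_primitive_diff:
  assumes s: "s > 0" and c: "c \<ge> 1/2"
  shows "schur_weight s c \<le> schur_primitive s (c + 1/2) - schur_primitive s (c - 1/2)"
proof -
  define g where
    "g x = schur_primitive s (c + x) - schur_primitive s (c - x) - 2 * x * schur_weight s c" for x
  have deriv: "\<exists>y. (g has_real_derivative y) (at x) \<and> y \<ge> 0" if x: "0 < x" "x < 1/2" for x
  proof -
    have cx: "c + x > 0" "c - x > 0" using x c by auto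
    have d1: "((\<lambda>x. c + x) has_real_derivative 1) (at x)"
      and d2: "((\<lambda>x. c - x) has_real_derivative -1) (at x)"
      by (auto intro!: derivative_eq_intros)
    have "((\<lambda>x. schur_primitive s (c + x)) has_real_derivative schur_weight s (c + x) * 1) (at x)"
      by (rule DERIV_chain2[OF has_real_derivative_schur_primitive[OF s cx(1)] d1])
    moreover have
      "((\<lambda>x. schur_primitive s (c - x)) has_real_derivative schur_weight s (c - x) * -1) (at x)"
      by (rule DERIV_chain2[OF has_real_derivative_schur_primitive[OF s cx(2)] d2])
    ultimately have "(g has_real_derivative
        schur_weight s (c + x) * 1 - schur_weight s (c - x) * -1 - 2 * schur_weight s c) (at x)"
      unfolding g_def[abs_def] by (auto intro!: derivative_eq_intros)
    moreover have "schur_weight s (c + x) + schur_weight s (c - x) \<ge> 2 * schur_weight s c"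
      using schur_weight_midpoint_convex[OF s, of x c] x c by simp
    ultimately show ?thesis by (intro exI) auto
  qed
  have cont: "continuous_on {0..1/2} g"
    unfolding g_def[abs_def] schur_primitive_def using s by (intro continuous_intros) auto
  have "g 0 \<le> g (1/2)" by (rule DERIV_nonneg_imp_increasing_open[OF _ deriv cont]) auto
  then show ?thesis unfolding g_def by simp
qed

lemma sum_schur_weight_le_pi:
  assumes s: "s > 0"
  shows "(\<Sum>k\<in>{1..m}. schur_weight s (real k - 1/2)) \<le> pi"
proof -
  have "(\<Sum>k\<in>{1..m}. schur_weight s (real k - 1/2)) \<le> schur_primitive s (real m)"
  proof (induction m)
    case 0
    then show ?case by simp
  next
    case (Suc m)
    have "schur_weight s (real (Suc m) - 1/2)
        \<le> schur_primitive s (real (Suc m)) - schur_primitive s (real m)"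
      using schur_weight_le_primitive_diff[OF s, of "real (Suc m) - 1/2"] by simp
    with Suc show ?case by simp
  qed
  also have "\<dots> \<le> pi" by (rule schur_primitive_le_pi)
  finally show ?thesis .
qed

lemma sum_schur_weight_above_le_pi:
  assumes "\<beta> < n" "s > 0"
  shows "(\<Sum>b\<in>{\<beta>..<n}. schur_weight s (real b - real \<beta> + 1/2)) \<le> pi"
proof -
  have "(\<Sum>b\<in>{\<beta>..<n}. schur_weight s (real b - real \<beta> + 1/2))
      = (\<Sum>k\<in>{1..n-\<beta>}. schur_weight s (real k - 1/2))"
    by (rule sum.reindex_bij_witness[of _ "\<lambda>k. k + \<beta> - 1" "\<lambda>b. b + 1 - \<beta>"])
       (use assms in \<open>auto simp: of_nat_diff algebra_simps\<close>)
  also have "\<dots> \<le> pi" by (rule sum_schur_weight_le_pi[OF assms(2)])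
  finally show ?thesis .
qed

lemma sum_schur_weight_below_le_pi:
  assumes "s > 0"
  shows "(\<Sum>b\<in>{..\<alpha>}. schur_weight s (real \<alpha> - real b + 1/2)) \<le> pi"
proof -
  have "(\<Sum>b\<in>{..\<alpha>}. schur_weight s (real \<alpha> - real b + 1/2))
      = (\<Sum>k\<in>{1..\<alpha>+1}. schur_weight s (real k - 1/2))"
    by (rule sum.reindex_bij_witness[of _ "\<lambda>k. \<alpha> + 1 - k" "\<lambda>b. \<alpha> + 1 - b"])
       (auto simp: of_nat_diff algebra_simps)
  also have "\<dots> \<le> pi" by (rule sum_schur_weight_le_pi[OF assms])
  finally show ?thesis .
qed

section \<open>Moving one item of a ranking\<close>

definition perms :: "nat \<Rightarrow> (nat \<Rightarrow> nat) set" where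
  "perms n = {\<sigma>. \<sigma> permutes {..<n}}"

lemma finite_perms: "finite (perms n)"
  unfolding perms_def by (rule finite_permutations) simp

lemma id_in_perms: "id \<in> perms n"
  unfolding perms_def by (simp add: permutes_id)

lemma perms_less: "\<sigma> \<in> perms n \<Longrightarrow> p < n \<Longrightarrow> \<sigma> p < n"
  unfolding perms_def using permutes_in_image[of \<sigma> "{..<n}" p] by auto

lemma perms_inj: "\<sigma> \<in> perms n \<Longrightarrow> \<sigma> x = \<sigma> y \<Longrightarrow> x = y"
  unfolding perms_def using permutes_inj[of \<sigma> "{..<n}"] by (auto simp: inj_def)

definition move_rank :: "nat \<Rightarrow> nat \<Rightarrow> nat \<Rightarrow> nat" where
  "move_rank a b v = (if v = a then b else if a < b \<and> a < v \<and> v \<le> b then v - 1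
     else if b < a \<and> b \<le> v \<and> v < a then v + 1 else v)"

lemma move_rank_at [simp]: "move_rank a b a = b"
  unfolding move_rank_def by simp

lemma move_rank_inverse [simp]: "move_rank b a (move_rank a b v) = v"
  unfolding move_rank_def by auto

lemma move_rank_permutes:
  assumes "a < n" "b < n"
  shows "move_rank a b permutes {..<n}"
  unfolding permutes_def
proof (intro conjI allI impI)
  fix x assume "x \<notin> {..<n}"
  then show "move_rank a b x = x" using assms unfolding move_rank_def by auto
next
  fix y show "\<exists>!x. move_rank a b x = y"
    by (rule ex1I[of _ "move_rank b a y"]) auto
qed

lemma move_rank_le_iff: "u \<noteq> a \<Longrightarrow> v \<noteq> a \<Longrightarrow> move_rank a b u \<le> move_rank a b v \<longleftrightarrow> u \<le> v"
  unfolding move_rank_def by auto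

definition reinsert :: "(nat \<Rightarrow> nat) \<Rightarrow> nat \<Rightarrow> nat \<Rightarrow> nat \<Rightarrow> nat" where
  "reinsert \<sigma> p b = move_rank (\<sigma> p) b \<circ> \<sigma>"

lemma reinsert_in_perms: "\<sigma> \<in> perms n \<Longrightarrow> p < n \<Longrightarrow> b < n \<Longrightarrow> reinsert \<sigma> p b \<in> perms n"
  unfolding reinsert_def perms_def
  using permutes_compose[OF _ move_rank_permutes] perms_less by (auto simp: perms_def)

lemma reinsert_at [simp]: "reinsert \<sigma> p b p = b"
  unfolding reinsert_def by simp

lemma reinsert_reinsert: "reinsert (reinsert \<sigma> p b) p (\<sigma> p) = \<sigma>"
  unfolding reinsert_def by (auto simp: fun_eq_iff)

lemma cmp_differs_reinsert_other:
  assumes "\<sigma> \<in> perms n" "p \<noteq> i" "p \<noteq> j"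
  shows "\<not> cmp_differs \<sigma> (reinsert \<sigma> p b) i j"
proof -
  have "\<sigma> i \<noteq> \<sigma> p" "\<sigma> j \<noteq> \<sigma> p" using perms_inj[OF assms(1)] assms(2,3) by metis+
  then show ?thesis
    unfolding cmp_differs_def cmp_matrix_def reinsert_def by (simp add: move_rank_le_iff)
qed

lemma cmp_differs_reinsert_lower:
  assumes "\<sigma> i < \<sigma> j"
  shows "cmp_differs \<sigma> (reinsert \<sigma> i b) i j \<longleftrightarrow> \<sigma> j \<le> b"
    and "\<sigma> j \<le> b \<Longrightarrow> reinsert \<sigma> i b j = \<sigma> j - 1"
  using assms unfolding cmp_differs_def cmp_matrix_def reinsert_def move_rank_def by auto

lemma cmp_differs_reinsert_upper:
  assumes "\<sigma> i < \<sigma> j"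
  shows "cmp_differs \<sigma> (reinsert \<sigma> j b) i j \<longleftrightarrow> b \<le> \<sigma> i"
    and "b \<le> \<sigma> i \<Longrightarrow> reinsert \<sigma> j b i = \<sigma> i + 1"
  using assms unfolding cmp_differs_def cmp_matrix_def reinsert_def move_rank_def by auto

lemma cmp_differs_commute: "cmp_differs \<tau> \<sigma> i j = cmp_differs \<sigma> \<tau> i j"
  unfolding cmp_differs_def by auto

lemma cmp_differs_swap:
  "\<sigma> \<in> perms n \<Longrightarrow> \<tau> \<in> perms n \<Longrightarrow> i \<noteq> j \<Longrightarrow> cmp_differs \<sigma> \<tau> j i = cmp_differs \<sigma> \<tau> i j"
  unfolding cmp_differs_def cmp_matrix_def using perms_inj[of \<sigma> n i j] perms_inj[of \<tau> n i j] by auto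

lemma not_cmp_differs_diag: "\<not> cmp_differs \<sigma> \<tau> i i"
  unfolding cmp_differs_def cmp_matrix_def by simp

section \<open>The weights of the moves that flip a comparison\<close>

definition move_weight :: "(nat \<Rightarrow> nat) \<Rightarrow> nat \<Rightarrow> nat \<Rightarrow> real" where
  "move_weight \<sigma> p b = 1 / \<bar>real b - real (\<sigma> p)\<bar>"

definition rank_gap :: "nat \<Rightarrow> nat \<Rightarrow> (nat \<Rightarrow> nat) \<Rightarrow> real" where
  "rank_gap i j \<sigma> = \<bar>real (\<sigma> i) - real (\<sigma> j)\<bar>"

text \<open>The AM-GM parameter for cell (i,j) on an edge from \<sigma> to \<tau>.  The shift by 1/2 turns
  the weighted sums over the moves flipping (i,j) into Hilbert-type sums at half-integers.\<close>

definition balance :: "nat \<Rightarrow> nat \<Rightarrow> (nat \<Rightarrow> nat) \<Rightarrow> (nat \<Rightarrow> nat) \<Rightarrow> real" where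
  "balance i j \<sigma> \<tau> = sqrt ((rank_gap i j \<sigma> - 1/2) / (rank_gap i j \<tau> - 1/2))"

lemma rank_gap_ge_1:
  assumes "\<sigma> \<in> perms n" "i \<noteq> j"
  shows "rank_gap i j \<sigma> \<ge> 1"
proof -
  have "\<sigma> i \<noteq> \<sigma> j" using perms_inj[OF assms(1)] assms(2) by metis
  then show ?thesis unfolding rank_gap_def by (cases "\<sigma> i < \<sigma> j") auto
qed

lemma balance_pos:
  assumes "\<sigma> \<in> perms n" "\<tau> \<in> perms n" "cmp_differs \<sigma> \<tau> i j"
  shows "balance i j \<sigma> \<tau> > 0"
proof -
  have "i \<noteq> j" using assms(3) not_cmp_differs_diag by metis
  then show ?thesis
    unfolding balance_def using rank_gap_ge_1[OF assms(1)] rank_gap_ge_1[OF assms(2)] by force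
qed

lemma balance_swap: "balance j i \<sigma> \<tau> = balance i j \<sigma> \<tau>"
  unfolding balance_def rank_gap_def by (simp add: abs_minus_commute)

lemma balance_commute: "balance i j \<tau> \<sigma> = 1 / balance i j \<sigma> \<tau>"
  unfolding balance_def by (simp add: real_sqrt_divide)

definition flip_term :: "(nat \<Rightarrow> nat) \<Rightarrow> nat \<Rightarrow> nat \<Rightarrow> nat \<Rightarrow> nat \<Rightarrow> real" where
  "flip_term \<sigma> i j p b = (if cmp_differs \<sigma> (reinsert \<sigma> p b) i j
     then move_weight \<sigma> p b * balance i j \<sigma> (reinsert \<sigma> p b) else 0)"

lemma flip_term_other:
  "\<sigma> \<in> perms n \<Longrightarrow> p \<noteq> i \<Longrightarrow> p \<noteq> j \<Longrightarrow> flip_term \<sigma> i j p b = 0"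
  unfolding flip_term_def using cmp_differs_reinsert_other by simp

lemma flip_term_lower:
  assumes lt: "\<sigma> i < \<sigma> j"
  shows "flip_term \<sigma> i j i b = (if \<sigma> j \<le> b
    then schur_weight (real (\<sigma> j) - real (\<sigma> i) - 1/2) (real b - real (\<sigma> j) + 1/2) else 0)"
proof -
  note differs = cmp_differs_reinsert_lower[of \<sigma> i j b, OF lt]
  show ?thesis
  proof (cases "\<sigma> j \<le> b")
    case True
    define s t where "s = real (\<sigma> j) - real (\<sigma> i) - 1/2" and "t = real b - real (\<sigma> j) + 1/2"
    have st: "s > 0" "t > 0" using lt True unfolding s_def t_def by auto
    have "reinsert \<sigma> i b j = \<sigma> j - 1" using differs(2)[OF True] .
    then have "rank_gap i j (reinsert \<sigma> i b) - 1/2 = t"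
      unfolding rank_gap_def t_def using lt True by (simp add: of_nat_diff)
    moreover have "rank_gap i j \<sigma> - 1/2 = s" unfolding rank_gap_def s_def using lt by simp
    moreover have "move_weight \<sigma> i b = 1 / (s + t)"
      unfolding move_weight_def s_def t_def using True lt by simp
    ultimately have "move_weight \<sigma> i b * balance i j \<sigma> (reinsert \<sigma> i b) = schur_weight s t"
      unfolding balance_def using schur_weight_eq_sqrt_ratio[OF st] by simp
    then show ?thesis
      unfolding flip_term_def s_def t_def using differs(1) True by simp
  next
    case False
    then show ?thesis unfolding flip_term_def using differs(1) by simp
  qed
qed

lemma flip_term_upper:
  assumes lt: "\<sigma> i < \<sigma> j"
  shows "flip_term \<sigma> i j j b = (if b \<le> \<sigma> i
    then schur_weight (real (\<sigma> j) - real (\<sigma> i) - 1/2) (real (\<sigma> i) - real b + 1/2) else 0)"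
proof -
  note differs = cmp_differs_reinsert_upper[of \<sigma> i j b, OF lt]
  show ?thesis
  proof (cases "b \<le> \<sigma> i")
    case True
    define s t where "s = real (\<sigma> j) - real (\<sigma> i) - 1/2" and "t = real (\<sigma> i) - real b + 1/2"
    have st: "s > 0" "t > 0" using lt True unfolding s_def t_def by auto
    have "reinsert \<sigma> j b i = \<sigma> i + 1" using differs(2)[OF True] .
    then have "rank_gap i j (reinsert \<sigma> j b) - 1/2 = t"
      unfolding rank_gap_def t_def using True by simp
    moreover have "rank_gap i j \<sigma> - 1/2 = s" unfolding rank_gap_def s_def using lt by simp
    moreover have "move_weight \<sigma> j b = 1 / (s + t)"
      unfolding move_weight_def s_def t_def using True lt by simp
    ultimately have "move_weight \<sigma> j b * balance i j \<sigma> (reinsert \<sigma> j b) = schur_weight s t"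
      unfolding balance_def using schur_weight_eq_sqrt_ratio[OF st] by simp
    then show ?thesis
      unfolding flip_term_def s_def t_def using differs(1) True by simp
  next
    case False
    then show ?thesis unfolding flip_term_def using differs(1) by simp
  qed
qed

definition moves :: "nat \<Rightarrow> (nat \<Rightarrow> nat) \<Rightarrow> (nat \<times> nat) set" where
  "moves n \<sigma> = {(p, b). p < n \<and> b < n \<and> b \<noteq> \<sigma> p}"

lemma finite_moves: "finite (moves n \<sigma>)"
  by (rule finite_subset[of _ "{..<n} \<times> {..<n}"]) (auto simp: moves_def)

lemma sum_if_eq_sum_Pair_image:
  assumes "finite A" "{x\<in>A. P x} = Pair i ` B"
  shows "(\<Sum>x\<in>A. if P x then f (snd x) else 0) = (\<Sum>b\<in>B. f b)"
proof -
  have "(\<Sum>x\<in>A. if P x then f (snd x) else 0) = (\<Sum>x\<in>{x\<in>A. P x}. f (snd x))"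
    using assms(1) by (simp add: sum.inter_filter)
  also have "\<dots> = (\<Sum>b\<in>B. f b)"
    unfolding assms(2) by (subst sum.reindex) (auto simp: inj_on_def)
  finally show ?thesis .
qed

definition flip_weight :: "nat \<Rightarrow> nat \<Rightarrow> nat \<Rightarrow> (nat \<Rightarrow> nat) \<Rightarrow> real" where
  "flip_weight n i j \<sigma> = (\<Sum>x\<in>moves n \<sigma>. flip_term \<sigma> i j (fst x) (snd x))"

lemma flip_weight_le_two_pi_of_less:
  assumes \<sigma>: "\<sigma> \<in> perms n" and ij: "i < n" "j < n" and lt: "\<sigma> i < \<sigma> j"
  shows "flip_weight n i j \<sigma> \<le> 2 * pi"
proof -
  define s where "s = real (\<sigma> j) - real (\<sigma> i) - 1/2"
  have s: "s > 0" unfolding s_def using lt by simp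
  have "i \<noteq> j" using lt by auto
  have less: "\<sigma> i < n" "\<sigma> j < n" using perms_less[OF \<sigma>] ij by auto
  define A where "A x = (if fst x = i \<and> \<sigma> j \<le> snd x
    then schur_weight s (real (snd x) - real (\<sigma> j) + 1/2) else 0)" for x
  define B where "B x = (if fst x = j \<and> snd x \<le> \<sigma> i
    then schur_weight s (real (\<sigma> i) - real (snd x) + 1/2) else 0)" for x
  have split: "flip_term \<sigma> i j (fst x) (snd x) = A x + B x" for x
    using \<open>i \<noteq> j\<close> flip_term_lower[of \<sigma> i j, OF lt] flip_term_upper[of \<sigma> i j, OF lt]
      flip_term_other[OF \<sigma>]
    unfolding A_def B_def s_def by (cases "fst x = i"; cases "fst x = j") auto
  have "flip_weight n i j \<sigma> = (\<Sum>x\<in>moves n \<sigma>. A x) + (\<Sum>x\<in>moves n \<sigma>. B x)"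
    unfolding flip_weight_def split by (rule sum.distrib)
  also have "(\<Sum>x\<in>moves n \<sigma>. A x) = (\<Sum>b\<in>{\<sigma> j..<n}. schur_weight s (real b - real (\<sigma> j) + 1/2))"
    unfolding A_def
    by (rule sum_if_eq_sum_Pair_image[OF finite_moves]) (use lt less ij in \<open>auto simp: moves_def\<close>)
  also have "(\<Sum>x\<in>moves n \<sigma>. B x) = (\<Sum>b\<in>{..\<sigma> i}. schur_weight s (real (\<sigma> i) - real b + 1/2))"
    unfolding B_def
    by (rule sum_if_eq_sum_Pair_image[OF finite_moves]) (use lt less ij in \<open>auto simp: moves_def\<close>)
  finally show ?thesis
    using sum_schur_weight_above_le_pi[OF less(2) s] sum_schur_weight_below_le_pi[OF s, of "\<sigma> i"]
    by linarith
qed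

lemma flip_weight_le_two_pi:
  assumes \<sigma>: "\<sigma> \<in> perms n" and ij: "i < n" "j < n"
  shows "flip_weight n i j \<sigma> \<le> 2 * pi"
proof (cases "i = j")
  case True
  then show ?thesis unfolding flip_weight_def flip_term_def by (simp add: not_cmp_differs_diag)
next
  case False
  then consider "\<sigma> i < \<sigma> j" | "\<sigma> j < \<sigma> i"
    using perms_inj[OF \<sigma>, of i j] by linarith
  then show ?thesis
  proof cases
    case 1
    then show ?thesis by (rule flip_weight_le_two_pi_of_less[OF \<sigma> ij])
  next
    case 2
    have "flip_term \<sigma> i j p b = flip_term \<sigma> j i p b" if "(p, b) \<in> moves n \<sigma>" for p b
      using that reinsert_in_perms[OF \<sigma>] cmp_differs_swap[OF \<sigma> _ False] balance_swap
      unfolding flip_term_def moves_def by auto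
    then have "flip_weight n i j \<sigma> = flip_weight n j i \<sigma>"
      unfolding flip_weight_def by (intro sum.cong refl) auto
    also have "\<dots> \<le> 2 * pi" by (rule flip_weight_le_two_pi_of_less[OF \<sigma> ij(2) ij(1) 2])
    finally show ?thesis .
  qed
qed

section \<open>The adversary graph\<close>

definition inv_dist_sum :: "nat \<Rightarrow> real" where
  "inv_dist_sum n = (\<Sum>a<n. \<Sum>b\<in>{..<n}-{a}. 1 / \<bar>real b - real a\<bar>)"

lemma sum_inverse_diff_eq_harm: "(\<Sum>a<n. 1 / (real n - real a)) = (harm n :: real)"
proof -
  have "(\<Sum>a<n. 1 / (real n - real a)) = (\<Sum>k\<in>{1..n}. 1 / real k)"
    by (rule sum.reindex_bij_witness[of _ "\<lambda>k. n - k" "\<lambda>a. n - a"]) (auto simp: of_nat_diff)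
  also have "\<dots> = harm n" unfolding harm_def by (simp add: inverse_eq_divide)
  finally show ?thesis .
qed

lemma inv_dist_sum_eq: "inv_dist_sum n = 2 * (real n * harm n - real n)"
proof (induction n)
  case 0
  then show ?case by (simp add: inv_dist_sum_def)
next
  case (Suc n)
  let ?f = "\<lambda>a b. 1 / \<bar>real b - real a\<bar>"
  have new_column: "(\<Sum>b\<in>{..<Suc n}-{a}. ?f a b) = (\<Sum>b\<in>{..<n}-{a}. ?f a b) + 1 / (real n - real a)"
    if "a < n" for a
  proof -
    have "{..<Suc n}-{a} = insert n ({..<n}-{a})" using that by auto
    then show ?thesis using that by simp
  qed
  have new_row: "(\<Sum>b\<in>{..<Suc n}-{n}. ?f n b) = (\<Sum>b<n. 1 / (real n - real b))"
    by (rule sum.cong) auto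
  have "inv_dist_sum (Suc n) = (\<Sum>a<n. \<Sum>b\<in>{..<Suc n}-{a}. ?f a b) + (\<Sum>b\<in>{..<Suc n}-{n}. ?f n b)"
    unfolding inv_dist_sum_def by simp
  also have "\<dots> = inv_dist_sum n + 2 * harm n"
    unfolding new_row inv_dist_sum_def
    by (simp add: new_column sum.distrib sum_inverse_diff_eq_harm)
  finally have step: "inv_dist_sum (Suc n) = inv_dist_sum n + 2 * harm n" .
  have "real (Suc n) * harm (Suc n) = real n * harm n + harm n + 1"
    by (simp add: harm_Suc field_simps)
  then show ?case
    unfolding step Suc.IH by (simp add: algebra_simps)
qed

lemma euler_mascheroni_le_harm_minus_ln:
  assumes "n > 0"
  shows "(euler_mascheroni :: real) \<le> harm n - ln (real n)"
proof -
  have "(\<lambda>m. harm (Suc m) - ln (real (Suc m)) :: real) \<longlonglongrightarrow> euler_mascheroni"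
    using LIMSEQ_Suc[OF euler_mascheroni_LIMSEQ] by simp
  with decseq_harm_diff_ln have "euler_mascheroni \<le> harm (Suc (n - 1)) - ln (real (Suc (n - 1)))"
    by (rule decseq_ge)
  then show ?thesis using assms by simp
qed

lemma sum_move_weight:
  assumes \<sigma>: "\<sigma> \<in> perms n"
  shows "(\<Sum>x\<in>moves n \<sigma>. move_weight \<sigma> (fst x) (snd x)) = inv_dist_sum n"
proof -
  have "moves n \<sigma> = Sigma {..<n} (\<lambda>p. {..<n} - {\<sigma> p})" unfolding moves_def by auto
  then have "(\<Sum>x\<in>moves n \<sigma>. move_weight \<sigma> (fst x) (snd x))
      = (\<Sum>p<n. \<Sum>b\<in>{..<n} - {\<sigma> p}. 1 / \<bar>real b - real (\<sigma> p)\<bar>)"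
    unfolding move_weight_def by (simp add: sum.Sigma split_def)
  also have "\<dots> = inv_dist_sum n"
    unfolding inv_dist_sum_def
    by (rule sum.reindex_bij_betw[where g = "\<lambda>a. \<Sum>b\<in>{..<n}-{a}. 1 / \<bar>real b - real a\<bar>"])
       (use \<sigma> in \<open>auto simp: perms_def intro: permutes_imp_bij\<close>)
  finally show ?thesis .
qed

type_synonym edge = "(nat \<Rightarrow> nat) \<times> nat \<times> nat"

definition edges :: "nat \<Rightarrow> edge set" where
  "edges n = Sigma (perms n) (moves n)"

definition edge_src :: "edge \<Rightarrow> nat \<Rightarrow> nat" where
  "edge_src e = fst e"

definition edge_dst :: "edge \<Rightarrow> nat \<Rightarrow> nat" where
  "edge_dst e = reinsert (fst e) (fst (snd e)) (snd (snd e))"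

definition edge_weight :: "edge \<Rightarrow> real" where
  "edge_weight e = move_weight (fst e) (fst (snd e)) (snd (snd e))"

definition edge_reverse :: "edge \<Rightarrow> edge" where
  "edge_reverse e = (case e of (\<sigma>, p, b) \<Rightarrow> (reinsert \<sigma> p b, p, \<sigma> p))"

lemma edge_src_in_perms: "e \<in> edges n \<Longrightarrow> edge_src e \<in> perms n"
  unfolding edges_def edge_src_def by auto

lemma edge_dst_in_perms: "e \<in> edges n \<Longrightarrow> edge_dst e \<in> perms n"
  unfolding edges_def edge_dst_def moves_def using reinsert_in_perms by auto

lemma edge_src_neq_dst:
  assumes "e \<in> edges n"
  shows "edge_src e \<noteq> edge_dst e"
proof -
  obtain \<sigma> p b where e: "e = (\<sigma>, p, b)" "b \<noteq> \<sigma> p"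
    using assms unfolding edges_def moves_def by auto
  have "edge_dst e p = b" unfolding e edge_dst_def by simp
  then show ?thesis using e unfolding edge_src_def by auto
qed

lemma edge_weight_nonneg: "edge_weight e \<ge> 0"
  unfolding edge_weight_def move_weight_def by simp

lemma edge_reverse_in_edges: "e \<in> edges n \<Longrightarrow> edge_reverse e \<in> edges n"
  unfolding edges_def edge_reverse_def moves_def using reinsert_in_perms perms_less
  by (auto split: prod.splits)

lemma edge_reverse_reverse: "edge_reverse (edge_reverse e) = e"
  unfolding edge_reverse_def by (auto split: prod.splits simp: reinsert_reinsert)

lemma bij_betw_edge_reverse: "bij_betw edge_reverse (edges n) (edges n)"
  by (rule bij_betw_byWitness[where f' = edge_reverse])
     (auto simp: edge_reverse_reverse edge_reverse_in_edges)

lemma edge_src_reverse: "edge_src (edge_reverse e) = edge_dst e"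
  unfolding edge_src_def edge_dst_def edge_reverse_def by (auto split: prod.splits)

lemma edge_dst_reverse: "edge_dst (edge_reverse e) = edge_src e"
  unfolding edge_src_def edge_dst_def edge_reverse_def
  by (auto split: prod.splits simp: reinsert_reinsert)

lemma edge_weight_reverse: "edge_weight (edge_reverse e) = edge_weight e"
  unfolding edge_weight_def edge_reverse_def move_weight_def
  by (auto split: prod.splits simp: abs_minus_commute)

definition src_cost :: "nat \<Rightarrow> nat \<Rightarrow> ((nat \<Rightarrow> nat) \<Rightarrow> qvec) \<Rightarrow> edge \<Rightarrow> real" where
  "src_cost n w \<phi> e = (\<Sum>i<n. \<Sum>j<n. if cmp_differs (edge_src e) (edge_dst e) i j
     then edge_weight e * balance i j (edge_src e) (edge_dst e) * cell_norm w (\<phi> (edge_src e)) i j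
     else 0)"

definition dst_cost :: "nat \<Rightarrow> nat \<Rightarrow> ((nat \<Rightarrow> nat) \<Rightarrow> qvec) \<Rightarrow> edge \<Rightarrow> real" where
  "dst_cost n w \<phi> e = (\<Sum>i<n. \<Sum>j<n. if cmp_differs (edge_src e) (edge_dst e) i j
     then edge_weight e * (cell_norm w (\<phi> (edge_dst e)) i j / balance i j (edge_src e) (edge_dst e))
     else 0)"

lemma edge_query_change_le:
  assumes e: "e \<in> edges n"
  shows "edge_weight e * cmod (qinner n w (query_gate (edge_src e) (\<phi> (edge_src e)))
                                         (query_gate (edge_dst e) (\<phi> (edge_dst e)))
                                - qinner n w (\<phi> (edge_src e)) (\<phi> (edge_dst e)))
     \<le> src_cost n w \<phi> e + dst_cost n w \<phi> e"
proof -
  let ?s = "edge_src e" and ?t = "edge_dst e"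
  have "cmp_differs ?s ?t i j \<Longrightarrow> balance i j ?s ?t > 0" for i j
    by (rule balance_pos[OF edge_src_in_perms[OF e] edge_dst_in_perms[OF e]])
  from norm_query_gate_diff_le[where l = "\<lambda>i j. balance i j ?s ?t", OF this]
  have "edge_weight e * cmod (qinner n w (query_gate ?s (\<phi> ?s)) (query_gate ?t (\<phi> ?t))
                               - qinner n w (\<phi> ?s) (\<phi> ?t))
     \<le> edge_weight e * (\<Sum>i<n. \<Sum>j<n. if cmp_differs ?s ?t i j
          then balance i j ?s ?t * cell_norm w (\<phi> ?s) i j + cell_norm w (\<phi> ?t) i j / balance i j ?s ?t
          else 0)"
    by (rule mult_left_mono[OF _ edge_weight_nonneg])
  also have "\<dots> = src_cost n w \<phi> e + dst_cost n w \<phi> e"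
    unfolding src_cost_def dst_cost_def sum_distrib_left sum.distrib[symmetric]
    by (intro sum.cong refl) (simp add: distrib_left mult.assoc)
  finally show ?thesis .
qed

text \<open>Reversing edges exchanges the two costs; this is the symmetry of the Schur test.\<close>

lemma src_cost_edge_reverse: "src_cost n w \<phi> (edge_reverse e) = dst_cost n w \<phi> e"
  unfolding src_cost_def dst_cost_def edge_src_reverse edge_dst_reverse edge_weight_reverse
    cmp_differs_commute[of "edge_dst e"] balance_commute[of _ _ "edge_dst e"]
  by (intro sum.cong refl) simp

lemma sum_dst_cost_eq_sum_src_cost:
  "(\<Sum>e\<in>edges n. dst_cost n w \<phi> e) = (\<Sum>e\<in>edges n. src_cost n w \<phi> e)"
  using sum.reindex_bij_betw[OF bij_betw_edge_reverse, of "src_cost n w \<phi>"]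
  unfolding src_cost_edge_reverse .

lemma sum_src_cost_moves:
  "(\<Sum>x\<in>moves n \<sigma>. src_cost n w \<phi> (\<sigma>, x)) =
     (\<Sum>i<n. \<Sum>j<n. cell_norm w (\<phi> \<sigma>) i j * flip_weight n i j \<sigma>)"
proof -
  have "(\<Sum>x\<in>moves n \<sigma>. src_cost n w \<phi> (\<sigma>, x)) =
      (\<Sum>x\<in>moves n \<sigma>. \<Sum>i<n. \<Sum>j<n. cell_norm w (\<phi> \<sigma>) i j * flip_term \<sigma> i j (fst x) (snd x))"
    unfolding src_cost_def flip_term_def edge_src_def edge_dst_def edge_weight_def
    by (intro sum.cong refl) (simp add: mult_ac)
  also have "\<dots> = (\<Sum>i<n. \<Sum>j<n. \<Sum>x\<in>moves n \<sigma>. cell_norm w (\<phi> \<sigma>) i j * flip_term \<sigma> i j (fst x) (snd x))"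
    by (rule trans[OF sum.swap], rule sum.cong[OF refl], rule sum.swap)
  finally show ?thesis
    unfolding flip_weight_def by (simp only: sum_distrib_left)
qed

lemma sum_src_cost_le:
  assumes unit: "\<And>\<sigma>. \<sigma> \<in> perms n \<Longrightarrow> Re (qinner n w (\<phi> \<sigma>) (\<phi> \<sigma>)) = 1"
  shows "(\<Sum>e\<in>edges n. src_cost n w \<phi> e) \<le> 2 * pi * real (card (perms n))"
proof -
  have "(\<Sum>e\<in>edges n. src_cost n w \<phi> e) = (\<Sum>\<sigma>\<in>perms n. \<Sum>x\<in>moves n \<sigma>. src_cost n w \<phi> (\<sigma>, x))"
    unfolding edges_def by (subst sum.Sigma) (auto simp: finite_perms finite_moves case_prod_eta)
  also have "\<dots> = (\<Sum>\<sigma>\<in>perms n. \<Sum>i<n. \<Sum>j<n. cell_norm w (\<phi> \<sigma>) i j * flip_weight n i j \<sigma>)"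
    unfolding sum_src_cost_moves ..
  also have "\<dots> \<le> (\<Sum>\<sigma>\<in>perms n. \<Sum>i<n. \<Sum>j<n. cell_norm w (\<phi> \<sigma>) i j * (2 * pi))"
    by (intro sum_mono mult_left_mono flip_weight_le_two_pi cell_norm_nonneg) auto
  also have "\<dots> = (\<Sum>\<sigma>\<in>perms n. 2 * pi * Re (qinner n w (\<phi> \<sigma>) (\<phi> \<sigma>)))"
    unfolding Re_qinner_self by (simp add: sum_distrib_left sum_distrib_right mult.commute)
  also have "\<dots> = 2 * pi * real (card (perms n))" by (simp add: unit)
  finally show ?thesis .
qed

lemma sum_edge_query_change_le:
  assumes "\<And>\<sigma>. \<sigma> \<in> perms n \<Longrightarrow> Re (qinner n w (\<phi> \<sigma>) (\<phi> \<sigma>)) = 1"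
  shows "(\<Sum>e\<in>edges n. edge_weight e *
            cmod (qinner n w (query_gate (edge_src e) (\<phi> (edge_src e)))
                             (query_gate (edge_dst e) (\<phi> (edge_dst e)))
                  - qinner n w (\<phi> (edge_src e)) (\<phi> (edge_dst e))))
     \<le> 4 * pi * real (card (perms n))"
proof -
  have "(\<Sum>e\<in>edges n. edge_weight e *
            cmod (qinner n w (query_gate (edge_src e) (\<phi> (edge_src e)))
                             (query_gate (edge_dst e) (\<phi> (edge_dst e)))
                  - qinner n w (\<phi> (edge_src e)) (\<phi> (edge_dst e))))
      \<le> (\<Sum>e\<in>edges n. src_cost n w \<phi> e) + (\<Sum>e\<in>edges n. dst_cost n w \<phi> e)"
    unfolding sum.distrib[symmetric] by (intro sum_mono edge_query_change_le)
  also have "\<dots> \<le> 4 * pi * real (card (perms n))"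
    unfolding sum_dst_cost_eq_sum_src_cost using sum_src_cost_le[of n w \<phi>] assms by simp
  finally show ?thesis .
qed

section \<open>Progress of an exact sorting algorithm\<close>

lemma qinner_init_state:
  assumes "n > 0"
  shows "qinner n w init_state init_state = 1"
proof -
  have "(0, 0, False, 0) \<in> basis_set n w" using assms unfolding basis_set_def by simp
  moreover have "qinner n w init_state init_state =
      (\<Sum>x\<in>basis_set n w. if x = (0, 0, False, 0) then 1 else 0)"
    unfolding qinner_def init_state_def by (intro sum.cong refl) simp
  ultimately show ?thesis by simp
qed

locale exact_sorter =
  fixes n w T U Out E
  assumes exact: "exact_sorting_alg n w T U Out E" and n_pos: "n > 0"
begin

abbreviation state :: "nat \<Rightarrow> (nat \<Rightarrow> nat) \<Rightarrow> qvec" where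
  "state k \<sigma> \<equiv> run_state n w U \<sigma> k"

lemma unitary: "k \<le> T \<Longrightarrow> is_unitary n w (U k)"
  using exact unfolding exact_sorting_alg_def by blast

lemma povm: "is_povm n w Out E"
  using exact unfolding exact_sorting_alg_def by blast

lemma qinner_state_self: "k \<le> T \<Longrightarrow> qinner n w (state k \<sigma>) (state k \<sigma>) = 1"
proof (induction k)
  case 0
  then show ?case
    using qinner_apply_unitary[OF unitary] qinner_init_state[OF n_pos] by simp
next
  case (Suc k)
  then show ?case
    using qinner_apply_unitary[OF unitary[OF Suc.prems]] by (simp add: qinner_query_gate_same)
qed

lemma qinner_state_Suc:
  "Suc k \<le> T \<Longrightarrow> qinner n w (state (Suc k) \<sigma>) (state (Suc k) \<tau>) =
     qinner n w (query_gate \<sigma> (state k \<sigma>)) (query_gate \<tau> (state k \<tau>))"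
  using qinner_apply_unitary[OF unitary] by simp

lemma final_states_orthogonal:
  assumes "\<sigma> \<in> perms n" "\<tau> \<in> perms n" "\<sigma> \<noteq> \<tau>"
  shows "qinner n w (state T \<sigma>) (state T \<tau>) = 0"
proof -
  have "out_prob n w T U Out E \<sigma> \<sigma> = 1" "out_prob n w T U Out E \<tau> \<tau> = 1"
    using exact assms unfolding exact_sorting_alg_def perms_def by auto
  then have out: "\<sigma> \<in> Out" "\<tau> \<in> Out"
    and certain: "Re (qform n w (E \<sigma>) (state T \<sigma>)) = 1" "Re (qform n w (E \<tau>) (state T \<tau>)) = 1"
    unfolding out_prob_def by (auto split: if_splits)
  show ?thesis
    by (rule povm_certain_outcomes_orthogonal[OF povm out(2) out(1) assms(3)[symmetric]
          qinner_state_self[OF le_refl] certain(2) qinner_state_self[OF le_refl] certain(1)])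
qed

definition progress :: "nat \<Rightarrow> complex" where
  "progress k = (\<Sum>e\<in>edges n.
     of_real (edge_weight e) * qinner n w (state k (edge_src e)) (state k (edge_dst e)))"

lemma progress_0: "progress 0 = of_real (real (card (perms n)) * inv_dist_sum n)"
proof -
  have "(\<Sum>e\<in>edges n. edge_weight e) = (\<Sum>\<sigma>\<in>perms n. \<Sum>x\<in>moves n \<sigma>. move_weight \<sigma> (fst x) (snd x))"
    unfolding edges_def edge_weight_def
    by (subst sum.Sigma) (auto simp: finite_perms finite_moves split_def)
  also have "\<dots> = real (card (perms n)) * inv_dist_sum n"
    by (simp add: sum_move_weight)
  finally show ?thesis
    unfolding progress_def using qinner_state_self[of 0] by (simp flip: of_real_sum)
qed

lemma progress_T: "progress T = 0"
  unfolding progress_def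
  by (intro sum.neutral ballI)
     (simp add: final_states_orthogonal edge_src_in_perms edge_dst_in_perms edge_src_neq_dst)

lemma norm_progress_step_le:
  assumes "Suc k \<le> T"
  shows "cmod (progress (Suc k) - progress k) \<le> 4 * pi * real (card (perms n))"
proof -
  have "cmod (progress (Suc k) - progress k)
      \<le> (\<Sum>e\<in>edges n. edge_weight e *
            cmod (qinner n w (query_gate (edge_src e) (state k (edge_src e)))
                             (query_gate (edge_dst e) (state k (edge_dst e)))
                  - qinner n w (state k (edge_src e)) (state k (edge_dst e))))"
    unfolding progress_def qinner_state_Suc[OF assms] sum_subtractf[symmetric]
      right_diff_distrib[symmetric]
    by (rule order_trans[OF norm_sum]) (simp add: norm_mult edge_weight_nonneg)
  also have "\<dots> \<le> 4 * pi * real (card (perms n))"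
    by (rule sum_edge_query_change_le) (use qinner_state_self assms in simp)
  finally show ?thesis .
qed

lemma norm_progress_diff_le:
  "k \<le> T \<Longrightarrow> cmod (progress 0 - progress k) \<le> real k * (4 * pi * real (card (perms n)))"
proof (induction k)
  case 0
  then show ?case by simp
next
  case (Suc k)
  have "cmod (progress 0 - progress (Suc k))
      \<le> cmod (progress 0 - progress k) + cmod (progress (Suc k) - progress k)"
    using norm_triangle_ineq[of "progress 0 - progress k" "progress k - progress (Suc k)"]
    by (simp add: norm_minus_commute)
  also have "\<dots> \<le> real k * (4 * pi * real (card (perms n))) + 4 * pi * real (card (perms n))"
    using Suc norm_progress_step_le[OF Suc.prems] by (intro add_mono) auto
  finally show ?case by (simp add: algebra_simps)
qed

lemma inv_dist_sum_le: "inv_dist_sum n \<le> 4 * pi * real T"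
proof -
  have card: "real (card (perms n)) > 0"
    using finite_perms id_in_perms card_gt_0_iff by fastforce
  have "inv_dist_sum n \<ge> 0" unfolding inv_dist_sum_def by (intro sum_nonneg) auto
  then have "real (card (perms n)) * inv_dist_sum n = cmod (progress 0 - progress T)"
    unfolding progress_T progress_0 diff_zero norm_of_real using card by simp
  also have "\<dots> \<le> real (card (perms n)) * (4 * pi * real T)"
    using norm_progress_diff_le[of T] by (simp add: algebra_simps)
  finally show ?thesis using card by simp
qed

lemma query_lower_bound:
  "real T \<ge> real n * ln (real n) / (2 * pi) - (1 - euler_mascheroni) / (2 * pi) * real n"
proof -
  have "real n * (ln (real n) + euler_mascheroni) \<le> real n * harm n"
    using euler_mascheroni_le_harm_minus_ln[OF n_pos] by (intro mult_left_mono) auto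
  then have "real n * ln (real n) - (1 - euler_mascheroni) * real n \<le> 2 * pi * real T"
    using inv_dist_sum_le unfolding inv_dist_sum_eq by (simp add: algebra_simps)
  then show ?thesis
    by (simp add: field_simps)
qed

end

theorem corollary1:
  shows "\<exists>C::real. \<forall>n\<ge>2. \<forall>w T U Out E.
     exact_sorting_alg n w T U Out E \<longrightarrow>
       real T \<ge> real n * ln (real n) / (2 * pi)
                 - (1 - euler_mascheroni) / (2 * pi) * real n - C"
proof (intro exI[of _ 0] allI impI)
  fix n w T U Out E
  assume "2 \<le> n" "exact_sorting_alg n w T U Out E"
  then interpret exact_sorter n w T U Out E by unfold_locales auto
  show "real T \<ge> real n * ln (real n) / (2 * pi) - (1 - euler_mascheroni) / (2 * pi) * real n - 0"
    using query_lower_bound by simp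
qed

end
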